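(* Let $F_0$ be a QF-NIA formula, and let $F$ be a linearization of $F_0$ with artificial bounds $B$. Define, for each model $M$ of $F$, $\mathrm{cost}(M)$ to be the number of bounds in $B$ that are not satisfied by $M$. Then $\mathrm{cost}$ is admissible: $\mathrm{cost}(M)\ge 0$ for every model $M$ of $F$, and if $\mathrm{cost}(M)=0$ then $M$ (restricted to the variables of $F_0$) is a model of $F_0$.
   Context: A QF-NIA formula is a quantifier-free CNF formula whose atoms are polynomial inequalities with integer coefficients over integer-valued variables. Artificial bounds are a finite set $B$ of constraints $V\ge L$ or $V\le U$ ($L,U\in\mathbb{Z}$) on variables of $F_0$. A linearization $F$ of $F_0$ with artificial bounds $B$ is a QF-LIA formula obtained as follows. While some non-linear monomial $Q$ occurs, pick a variable $V$ of $Q$ that has both a lower bound $l$ and an upper bound $u$ in $F_0\cup B$. Introduce a fresh integer variable $v_Q$ and replace every occurrence of $Q$ by $v_Q$. Add, for each integer $K$ with $l\le K\le u$, the clause $V=K\rightarrow v_Q=Q[V:=K]$, where $Q[V:=K]$ is $Q$ with $V$ evaluated at $K$. New non-linear monomials appearing in these clauses are processed in the same way. $F$ does not contain the bounds of $B$. A model of $F$ is an integer assignment to all variables of $F$ (original and fresh) satisfying $F$. *)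

theory Defs
  imports Main "HOL-Library.Multiset"
begin

text \<open>A monomial is a multiset of variables; a polynomial with integer coefficients
  is a list of terms (coefficient, monomial). The empty monomial is the constant 1.\<close>

type_synonym 'v mono = "'v multiset"
type_synonym 'v poly = "(int \<times> 'v mono) list"

text \<open>An atom is the polynomial inequality  p >= 0  (every polynomial inequality with
  integer coefficients can be brought into this form).\<close>
datatype 'v atom = Geq0 "'v poly"

type_synonym 'v clause = "'v atom list"
type_synonym 'v formula = "'v clause list"

type_synonym 'v assignment = "'v \<Rightarrow> int"

definition eval_mono :: "'v assignment \<Rightarrow> 'v mono \<Rightarrow> int" where
  "eval_mono \<sigma> m = prod_mset (image_mset \<sigma> m)"

definition eval_poly :: "'v assignment \<Rightarrow> 'v poly \<Rightarrow> int" where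
  "eval_poly \<sigma> p = sum_list (map (\<lambda>(c, m). c * eval_mono \<sigma> m) p)"

fun sat_atom :: "'v assignment \<Rightarrow> 'v atom \<Rightarrow> bool" where
  "sat_atom \<sigma> (Geq0 p) = (eval_poly \<sigma> p \<ge> 0)"

definition sat_clause :: "'v assignment \<Rightarrow> 'v clause \<Rightarrow> bool" where
  "sat_clause \<sigma> C = (\<exists>a\<in>set C. sat_atom \<sigma> a)"

definition sat_formula :: "'v assignment \<Rightarrow> 'v formula \<Rightarrow> bool" where
  "sat_formula \<sigma> F = (\<forall>C\<in>set F. sat_clause \<sigma> C)"

fun atom_poly :: "'v atom \<Rightarrow> 'v poly" where
  "atom_poly (Geq0 p) = p"

definition monos_formula :: "'v formula \<Rightarrow> 'v mono set" where
  "monos_formula F = {m. \<exists>C\<in>set F. \<exists>a\<in>set C. \<exists>c. (c, m) \<in> set (atom_poly a)}"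

definition vars_formula :: "'v formula \<Rightarrow> 'v set" where
  "vars_formula F = (\<Union>m\<in>monos_formula F. set_mset m)"

definition nonlinear_mono :: "'v mono \<Rightarrow> bool" where
  "nonlinear_mono m = (size m \<ge> 2)"

definition linear_atom :: "'v atom \<Rightarrow> bool" where
  "linear_atom a = (\<forall>(c, m)\<in>set (atom_poly a). \<not> nonlinear_mono m)"

definition linear_formula :: "'v formula \<Rightarrow> bool" where
  "linear_formula F = (\<forall>m\<in>monos_formula F. \<not> nonlinear_mono m)"

datatype 'v bound = Lower 'v int | Upper 'v int

fun sat_bound :: "'v assignment \<Rightarrow> 'v bound \<Rightarrow> bool" where
  "sat_bound \<sigma> (Lower V L) = (\<sigma> V \<ge> L)"
| "sat_bound \<sigma> (Upper V U) = (\<sigma> V \<le> U)"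

fun bound_var :: "'v bound \<Rightarrow> 'v" where
  "bound_var (Lower V _) = V"
| "bound_var (Upper V _) = V"

text \<open>A bound constraint occurring in F0: a unit clause consisting of a linear atom
  expressing exactly  V >= L  (resp. V <= U).\<close>
definition lower_bound_in :: "'v formula \<Rightarrow> 'v bound set \<Rightarrow> 'v \<Rightarrow> int \<Rightarrow> bool" where
  "lower_bound_in F0 B V L =
     (Lower V L \<in> B \<or>
      (\<exists>a. [a] \<in> set F0 \<and> linear_atom a \<and> (\<forall>\<sigma>. sat_atom \<sigma> a \<longleftrightarrow> \<sigma> V \<ge> L)))"

definition upper_bound_in :: "'v formula \<Rightarrow> 'v bound set \<Rightarrow> 'v \<Rightarrow> int \<Rightarrow> bool" where
  "upper_bound_in F0 B V U =
     (Upper V U \<in> B \<or>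
      (\<exists>a. [a] \<in> set F0 \<and> linear_atom a \<and> (\<forall>\<sigma>. sat_atom \<sigma> a \<longleftrightarrow> \<sigma> V \<le> U)))"

definition subst_poly :: "'v mono \<Rightarrow> 'v \<Rightarrow> 'v poly \<Rightarrow> 'v poly" where
  "subst_poly Q v p = map (\<lambda>(c, m). if m = Q then (c, {#v#}) else (c, m)) p"

fun subst_atom :: "'v mono \<Rightarrow> 'v \<Rightarrow> 'v atom \<Rightarrow> 'v atom" where
  "subst_atom Q v (Geq0 p) = Geq0 (subst_poly Q v p)"

definition subst_formula :: "'v mono \<Rightarrow> 'v \<Rightarrow> 'v formula \<Rightarrow> 'v formula" where
  "subst_formula Q v F = map (map (subst_atom Q v)) F"

text \<open>Q[V:=K] as a polynomial term: K^(multiplicity of V in Q) times Q without V.\<close>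
definition eval_var_mono :: "'v mono \<Rightarrow> 'v \<Rightarrow> int \<Rightarrow> int \<times> 'v mono" where
  "eval_var_mono Q V K = (K ^ count Q V, filter_mset (\<lambda>x. x \<noteq> V) Q)"

text \<open>The clause  V = K --> v = Q[V:=K]  in CNF over atoms  p >= 0:
  (V >= K+1 \/ V <= K-1 \/ v - Q[V:=K] >= 0) /\ (V >= K+1 \/ V <= K-1 \/ Q[V:=K] - v >= 0).\<close>
definition link_clauses :: "'v \<Rightarrow> int \<Rightarrow> 'v \<Rightarrow> 'v mono \<Rightarrow> 'v formula" where
  "link_clauses V K v Q =
     (let (d, R) = eval_var_mono Q V K;
          neq = [Geq0 [(1, {#V#}), (-(K + 1), {#})], Geq0 [(-1, {#V#}), (K - 1, {#})]]
      in [neq @ [Geq0 [(1, {#v#}), (-d, R)]],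
          neq @ [Geq0 [(-1, {#v#}), (d, R)]]])"

definition lin_step :: "'v formula \<Rightarrow> 'v bound set \<Rightarrow> 'v formula \<Rightarrow> 'v formula \<Rightarrow> bool" where
  "lin_step F0 B G G' =
     (\<exists>Q V l u v.
        Q \<in> monos_formula G \<and> nonlinear_mono Q \<and> V \<in># Q \<and>
        lower_bound_in F0 B V l \<and> upper_bound_in F0 B V u \<and>
        v \<notin> vars_formula G \<and> v \<notin> vars_formula F0 \<and> v \<notin> bound_var ` B \<and>
        G' = subst_formula Q v G @ concat (map (\<lambda>K. link_clauses V K v Q) [l..u]))"

definition is_linearization :: "'v formula \<Rightarrow> 'v bound set \<Rightarrow> 'v formula \<Rightarrow> bool" where
  "is_linearization F0 B F = ((lin_step F0 B)\<^sup>*\<^sup>* F0 F \<and> linear_formula F)"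

definition cost :: "'v bound set \<Rightarrow> 'v assignment \<Rightarrow> nat" where
  "cost B M = card {b \<in> B. \<not> sat_bound M b}"

end

theory Submission
  imports Defs
begin

text \<open>Under the bounds, the value of the chosen variable V lies in [l..u], so the link
  clauses for K = M V force the fresh variable v to take the value of the replaced
  monomial Q; then the substituted formula is equivalent to the one before the step.
  The bounds that F0 itself contributes are linear unit clauses, which no substitution
  of a nonlinear monomial touches, so they survive into F and are enforced by any of its
  models. Hence a model of F satisfying every artificial bound is a model of F0.\<close>

lemma eval_poly_subst_poly:
  assumes "M v = eval_mono M Q"
  shows "eval_poly M (subst_poly Q v p) = eval_poly M p"
  unfolding eval_poly_def subst_poly_def
  by (induction p) (auto simp: eval_mono_def assms)

lemma sat_atom_subst_atom:
  assumes "M v = eval_mono M Q"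
  shows "sat_atom M (subst_atom Q v a) \<longleftrightarrow> sat_atom M a"
  by (cases a) (simp add: eval_poly_subst_poly[OF assms])

lemma sat_formula_subst_formula:
  assumes "M v = eval_mono M Q"
  shows "sat_formula M (subst_formula Q v G) \<longleftrightarrow> sat_formula M G"
  unfolding sat_formula_def sat_clause_def subst_formula_def
  by (simp add: sat_atom_subst_atom[OF assms])

lemma subst_atom_linear:
  assumes "linear_atom a" and "nonlinear_mono Q"
  shows "subst_atom Q v a = a"
proof (cases a)
  case (Geq0 p)
  have "\<forall>(c, m)\<in>set p. m \<noteq> Q"
    using assms Geq0 unfolding linear_atom_def by auto
  then have "subst_poly Q v p = p"
    unfolding subst_poly_def by (induction p) auto
  then show ?thesis using Geq0 by simp
qed

lemma eval_mono_eval_var_mono: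
  "eval_mono M Q = (let (d, R) = eval_var_mono Q V (M V) in d * eval_mono M R)"
proof -
  have "Q = filter_mset (\<lambda>x. x = V) Q + filter_mset (\<lambda>x. x \<noteq> V) Q"
    by (rule multiset_partition)
  then have "eval_mono M Q =
      eval_mono M (filter_mset (\<lambda>x. x = V) Q) * eval_mono M (filter_mset (\<lambda>x. x \<noteq> V) Q)"
    unfolding eval_mono_def by (metis image_mset_union prod_mset.union)
  then show ?thesis
    by (simp add: eval_var_mono_def filter_eq_replicate_mset eval_mono_def)
qed

lemma sat_link_clauses:
  "sat_formula M (link_clauses V K v Q) \<longleftrightarrow> (M V = K \<longrightarrow> M v = eval_mono M Q)"
proof -
  obtain d R where dR: "eval_var_mono Q V K = (d, R)" by fastforce
  have "sat_formula M (link_clauses V K v Q) \<longleftrightarrow> (M V = K \<longrightarrow> M v = d * eval_mono M R)"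
    unfolding link_clauses_def dR sat_formula_def sat_clause_def
    by (auto simp: eval_poly_def eval_mono_def)
  then show ?thesis
    using eval_mono_eval_var_mono[of M Q V] dR by auto
qed

lemma lin_step_keeps_linear_unit:
  assumes "lin_step F0 B G G'" and "[a] \<in> set G" and "linear_atom a"
  shows "[a] \<in> set G'"
proof -
  obtain Q v K where Q: "nonlinear_mono Q" and G': "G' = subst_formula Q v G @ K"
    using assms(1) unfolding lin_step_def by blast
  have "map (subst_atom Q v) [a] \<in> set (subst_formula Q v G)"
    using assms(2) unfolding subst_formula_def by (metis imageI list.set_map)
  then show ?thesis
    using subst_atom_linear[OF assms(3) Q] G' by simp
qed

lemma lin_steps_keep_linear_unit:
  assumes "(lin_step F0 B)\<^sup>*\<^sup>* G G'" and "[a] \<in> set G" and "linear_atom a"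
  shows "[a] \<in> set G'"
  using assms by induction (auto intro: lin_step_keeps_linear_unit)

lemma lin_step_reflects_sat:
  assumes "lin_step F0 B G G'" and "sat_formula M G'"
    and "\<forall>b\<in>B. sat_bound M b"
    and "\<And>a. [a] \<in> set F0 \<Longrightarrow> linear_atom a \<Longrightarrow> sat_atom M a"
  shows "sat_formula M G"
proof -
  obtain Q V l u v where
    lb: "lower_bound_in F0 B V l" and ub: "upper_bound_in F0 B V u" and
    G': "G' = subst_formula Q v G @ concat (map (\<lambda>K. link_clauses V K v Q) [l..u])"
    using assms(1) unfolding lin_step_def by blast
  have "l \<le> M V"
    using lb assms(3,4) unfolding lower_bound_in_def by fastforce
  moreover have "M V \<le> u"
    using ub assms(3,4) unfolding upper_bound_in_def by fastforce
  ultimately have "set (link_clauses V (M V) v Q) \<subseteq> set G'"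
    using G' by auto
  then have "sat_formula M (link_clauses V (M V) v Q)"
    using assms(2) unfolding sat_formula_def by auto
  then have "M v = eval_mono M Q"
    by (simp add: sat_link_clauses)
  moreover have "sat_formula M (subst_formula Q v G)"
    using assms(2) G' unfolding sat_formula_def by auto
  ultimately show ?thesis
    by (simp add: sat_formula_subst_formula)
qed

lemma lin_steps_reflect_sat:
  assumes "(lin_step F0 B)\<^sup>*\<^sup>* F0 G" and "sat_formula M G"
    and "\<forall>b\<in>B. sat_bound M b"
  shows "sat_formula M F0"
proof -
  have units: "sat_atom M a" if "[a] \<in> set F0" and "linear_atom a" for a
  proof -
    have "[a] \<in> set G"
      using lin_steps_keep_linear_unit[OF assms(1) that] .
    then show ?thesis
      using assms(2) unfolding sat_formula_def sat_clause_def by auto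
  qed
  from assms(1,2) show ?thesis
  proof (induction rule: rtranclp_induct)
    case base
    then show ?case .
  next
    case (step G G')
    then show ?case
      using lin_step_reflects_sat[OF step.hyps(2) step.prems assms(3) units] by blast
  qed
qed

lemma cost_eq_0_iff:
  assumes "finite B"
  shows "cost B M = 0 \<longleftrightarrow> (\<forall>b\<in>B. sat_bound M b)"
  using assms unfolding cost_def by auto

theorem lemma3p2:
  fixes F0 F :: "'v formula" and B :: "'v bound set"
  assumes "finite B"
    and "is_linearization F0 B F"
  shows "\<forall>M. sat_formula M F \<longrightarrow> cost B M \<ge> 0 \<and> (cost B M = 0 \<longrightarrow> sat_formula M F0)"
proof (intro allI impI conjI)
  fix M
  assume "sat_formula M F" and "cost B M = 0"
  then show "sat_formula M F0"
    using assms lin_steps_reflect_sat cost_eq_0_iff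
    unfolding is_linearization_def by blast
qed simp

end
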